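(* Assume $r\neq0$ and $r+s=0$. For $0\le j\le d$ let $\bar\theta_j=(d-2j)(d-2j+1)$. Then for all $0\le i,j\le d$, $$u_i(\bar\theta_j)={}_4F_3\left(\genfrac..{0pt}{}{-i,\ i-d+r,\ -j,\ j-d-\frac12}{-d,\ \frac{r-d}{2},\ \frac{r-d+1}{2}}\,\middle|\,1\right).$$
   Context: Fix an integer $d\ge0$ and $r,s\in(-1,\infty)$. Write $(x)_i=x(x+1)\cdots(x+i-1)$, $(x)_0=1$, and ${}_mF_n\left(\genfrac..{0pt}{}{a_1,\dots,a_m}{b_1,\dots,b_n}\,\middle|\,1\right)=\sum_{k\ge0}\frac{(a_1)_k\cdots(a_m)_k}{(b_1)_k\cdots(b_n)_k\,k!}$ (terminating sums here). For $0\le i\le d$ put $\theta_i=(d-i)(d-i+r+s+1)$ (these are distinct). Let $u_0,\dots,u_d$ be the unique real polynomials of degree at most $d$ such that $u_i(\theta_j)={}_3F_2\left(\genfrac..{0pt}{}{-i,-j,j-r-s-2d-1}{-s-d,-d}\,\middle|\,1\right)$ for all $0\le i,j\le d$ (the dual Hahn polynomials). *)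

theory Defs
  imports Complex_Main "HOL-Computational_Algebra.Polynomial"
begin

text \<open>In all uses below some numerator parameter is a non-positive integer -i with i <= N,
  so all terms with k > i vanish and the truncation is exactly the terminating sum.\<close>
definition hypF :: "real list \<Rightarrow> real list \<Rightarrow> nat \<Rightarrow> real" where
  "hypF as bs N = (\<Sum>k\<le>N. prod_list (map (\<lambda>a. pochhammer a k) as)
                       / (prod_list (map (\<lambda>b. pochhammer b k) bs) * fact k))"

definition dh_theta :: "nat \<Rightarrow> real \<Rightarrow> real \<Rightarrow> nat \<Rightarrow> real" where
  "dh_theta d r s i = (real d - real i) * (real d - real i + r + s + 1)"

definition dual_hahn_u :: "nat \<Rightarrow> real \<Rightarrow> real \<Rightarrow> nat \<Rightarrow> real poly" where
  "dual_hahn_u d r s i = (THE p. degree p \<le> d \<and>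
      (\<forall>j\<le>d. poly p (dh_theta d r s j) =
         hypF [- real i, - real j, real j - r - s - 2 * real d - 1]
              [- s - real d, - real d] d))"

end

theory Submission
  imports Defs
begin

(*
  Since (-j)_n (j + c)_n = prod_{l<n} (l(l + c) - j(j + c)), a terminating hypergeometric sum
  whose last two numerator parameters are -j, j + c is a Newton-type sum
  sum_n a_n prod_{l<n} (t_l - z) in z = j(j + c) with nodes t_l = l(l + c).
  In this form u_i(theta) is the Newton sum with nodes theta_l; for s = -r and
  theta = (d - 2j)(d - 2j + 1) it becomes the 3F2 Newton sum with nodes l(l - 2d - 1) at z = 4y,
  while the 4F3 is the Newton sum with nodes l(l - d - 1/2) at y = j(j - d - 1/2).
  As functions of i, both satisfy the three-term recurrence
  z f(i) = A_i f(i + 1) - (A_i + C_i) f(i) + C_i f(i - 1),  A_i = (i - d)(i - d + r),  C_i = i(i + r),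
  which is checked coefficientwise. Both start with f(0) = 1, and A_i is nonzero for i < d
  because r is not an integer, so they agree for all i <= d. The identification of u_i with
  its Newton form is by interpolation at the d + 1 distinct points theta_j.
*)

definition newton_sum :: "(nat \<Rightarrow> 'a::comm_ring_1) \<Rightarrow> (nat \<Rightarrow> 'a) \<Rightarrow> 'a \<Rightarrow> nat \<Rightarrow> 'a" where
  "newton_sum c t z N = (\<Sum>n\<le>N. c n * (\<Prod>l<n. t l - z))"

lemma newton_sum_cong_nodes:
  assumes "\<And>l. t l - z = t' l - z'"
  shows "newton_sum c t z N = newton_sum c t' z' N"
  unfolding newton_sum_def using assms by simp

lemma newton_sum_eq_coeff_0:
  assumes "\<And>n. n > 0 \<Longrightarrow> c n = 0"
  shows "newton_sum c t z N = c 0"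
proof -
  have "newton_sum c t z N = (\<Sum>n\<le>N. if n = 0 then c 0 else 0)"
    unfolding newton_sum_def by (rule sum.cong) (auto simp: assms)
  then show ?thesis by simp
qed

lemma mult_newton_sum:
  "z * newton_sum c t z N =
    newton_sum (\<lambda>n. c n * t n - (if n = 0 then 0 else c (n - 1))) t z N - c N * (\<Prod>l<Suc N. t l - z)"
proof (induction N)
  case 0
  then show ?case by (simp add: newton_sum_def algebra_simps)
next
  case (Suc N)
  then show ?case by (simp add: newton_sum_def algebra_simps)
qed

lemma newton_sum_three_term:
  assumes coeff: "\<And>n. n \<le> N \<Longrightarrow>
      k * (c n * t n - (if n = 0 then 0 else c (n - 1))) = A * c_succ n - B * c n + C * c_pred n"
    and last: "c N = 0"
  shows "k * z * newton_sum c t z N =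
    A * newton_sum c_succ t z N - B * newton_sum c t z N + C * newton_sum c_pred t z N"
proof -
  have "k * z * newton_sum c t z N =
      k * newton_sum (\<lambda>n. c n * t n - (if n = 0 then 0 else c (n - 1))) t z N"
    using last by (simp add: mult_newton_sum mult.assoc)
  also have "\<dots> = newton_sum (\<lambda>n. A * c_succ n - B * c n + C * c_pred n) t z N"
    unfolding newton_sum_def sum_distrib_left
    by (rule sum.cong) (simp_all add: coeff mult.assoc[symmetric])
  also have "\<dots> = A * newton_sum c_succ t z N - B * newton_sum c t z N + C * newton_sum c_pred t z N"
    by (simp add: newton_sum_def sum_distrib_left sum.distrib sum_subtractf algebra_simps)
  finally show ?thesis .
qed

definition newton_poly :: "(nat \<Rightarrow> 'a::comm_ring_1) \<Rightarrow> (nat \<Rightarrow> 'a) \<Rightarrow> nat \<Rightarrow> 'a poly" where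
  "newton_poly c t N = (\<Sum>n\<le>N. smult (c n) (\<Prod>l<n. [:t l, -1:]))"

lemma poly_newton_poly: "poly (newton_poly c t N) z = newton_sum c t z N"
  by (simp add: newton_poly_def newton_sum_def poly_sum poly_prod)

lemma degree_newton_poly: "degree (newton_poly c t N) \<le> N"
  unfolding newton_poly_def
proof (rule degree_sum_le)
  fix n assume "n \<in> {..N}"
  have "degree (\<Prod>l<n. [:t l, -1:]) \<le> (\<Sum>l<n. degree [:t l, -1:])"
    using degree_prod_sum_le[of "{..<n}" "\<lambda>l. [:t l, -1:]"] by (simp add: o_def)
  also have "\<dots> \<le> n"
    using sum_bounded_above[of "{..<n}" "\<lambda>l. degree [:t l, -1:]" 1] by (simp add: degree_pCons_le)
  finally show "degree (smult (c n) (\<Prod>l<n. [:t l, -1:])) \<le> N"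
    using \<open>n \<in> {..N}\<close> degree_smult_le[of "c n" "\<Prod>l<n. [:t l, -1:]"] by simp
qed simp

lemma three_term_recurrence_unique:
  fixes f g :: "nat \<Rightarrow> 'a::field"
  assumes f: "\<And>k. k < N \<Longrightarrow> z * f k = A k * f (Suc k) - B k * f k + C k * f (k - 1)"
    and g: "\<And>k. k < N \<Longrightarrow> z * g k = A k * g (Suc k) - B k * g k + C k * g (k - 1)"
    and A: "\<And>k. k < N \<Longrightarrow> A k \<noteq> 0"
    and init: "f 0 = g 0"
    and "n \<le> N"
  shows "f n = g n"
  using \<open>n \<le> N\<close>
proof (induction n rule: less_induct)
  case (less n)
  show ?case
  proof (cases n)
    case 0
    with init show ?thesis by simp
  next
    case (Suc k)
    with less have "f k = g k" "f (k - 1) = g (k - 1)" by simp_all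
    with f[of k] g[of k] Suc less.prems have "A k * f (Suc k) = A k * g (Suc k)"
      by (auto simp: algebra_simps)
    with A[of k] Suc less.prems show ?thesis by auto
  qed
qed

lemma pochhammer_minus_mult_pochhammer:
  fixes a c :: "'a::comm_ring_1"
  shows "pochhammer (- a) k * pochhammer (a + c) k = (\<Prod>l<k. of_nat l * (of_nat l + c) - a * (a + c))"
  by (induction k) (simp_all add: pochhammer_Suc algebra_simps)

lemma hypF_as_newton_sum:
  "hypF (as @ [- a, a + c]) bs N =
    newton_sum (\<lambda>n. prod_list (map (\<lambda>b. pochhammer b n) as)
                      / (prod_list (map (\<lambda>b. pochhammer b n) bs) * fact n))
      (\<lambda>l. real l * (real l + c)) (a * (a + c)) N"
  unfolding hypF_def newton_sum_def
  by (rule sum.cong) (simp_all add: pochhammer_minus_mult_pochhammer[symmetric] mult_ac)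

lemma dh_theta_eq_node:
  "dh_theta d r s l = real l * (real l - r - s - 2 * real d - 1) + real d * (real d + r + s + 1)"
  unfolding dh_theta_def by (simp add: algebra_simps)

lemma inj_on_dh_theta:
  assumes "r + s > -2"
  shows "inj_on (dh_theta d r s) {..d}"
proof (rule inj_onI)
  fix a b assume "a \<in> {..d}" "b \<in> {..d}" and eq: "dh_theta d r s a = dh_theta d r s b"
  define u v where "u = real d - real a" and "v = real d - real b"
  have "(u - v) * (u + v + r + s + 1) = 0"
    using eq unfolding dh_theta_def u_def v_def by (simp add: algebra_simps)
  moreover have "u + v + r + s + 1 \<noteq> 0 \<or> u = v"
    using \<open>a \<in> {..d}\<close> \<open>b \<in> {..d}\<close> assms unfolding u_def v_def by auto
  ultimately show "a = b"
    unfolding u_def v_def by auto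
qed

lemma dual_hahn_u_eqI:
  assumes "r + s > -2" and "degree p \<le> d"
    and interp: "\<And>j. j \<le> d \<Longrightarrow> poly p (dh_theta d r s j) =
      hypF [- real i, - real j, real j - r - s - 2 * real d - 1] [- s - real d, - real d] d"
  shows "dual_hahn_u d r s i = p"
  unfolding dual_hahn_u_def
proof (rule the_equality)
  fix q assume q: "degree q \<le> d \<and> (\<forall>j\<le>d. poly q (dh_theta d r s j) =
      hypF [- real i, - real j, real j - r - s - 2 * real d - 1] [- s - real d, - real d] d)"
  have card: "card (dh_theta d r s ` {..d}) = Suc d"
    using card_image[OF inj_on_dh_theta[OF assms(1)]] by simp
  show "q = p"
    by (rule poly_eqI_degree[of "dh_theta d r s ` {..d}"]) (use q interp assms(2) card in auto)
qed (use assms in auto)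

definition dual_hahn_coeff :: "nat \<Rightarrow> real \<Rightarrow> real \<Rightarrow> nat \<Rightarrow> real" where
  "dual_hahn_coeff d s x n =
    pochhammer (- x) n / (pochhammer (- s - real d) n * pochhammer (- real d) n * fact n)"

lemma poly_dual_hahn_u:
  assumes "r + s > -2"
  shows "poly (dual_hahn_u d r s i) t = newton_sum (dual_hahn_coeff d s (real i)) (dh_theta d r s) t d"
proof -
  define c where "c = - r - s - 2 * real d - 1"
  have coeff: "(\<lambda>n. prod_list (map (\<lambda>b. pochhammer b n) [- real i])
      / (prod_list (map (\<lambda>b. pochhammer b n) [- s - real d, - real d]) * fact n))
    = dual_hahn_coeff d s (real i)"
    by (simp add: fun_eq_iff dual_hahn_coeff_def)
  have "poly (newton_poly (dual_hahn_coeff d s (real i)) (dh_theta d r s) d) (dh_theta d r s j) =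
      hypF [- real i, - real j, real j - r - s - 2 * real d - 1] [- s - real d, - real d] d" for j
  proof -
    have "poly (newton_poly (dual_hahn_coeff d s (real i)) (dh_theta d r s) d) (dh_theta d r s j) =
        newton_sum (dual_hahn_coeff d s (real i)) (\<lambda>l. real l * (real l + c)) (real j * (real j + c)) d"
      unfolding poly_newton_poly
      by (rule newton_sum_cong_nodes) (simp add: dh_theta_eq_node c_def algebra_simps)
    also have "\<dots> = hypF ([- real i] @ [- real j, real j + c]) [- s - real d, - real d] d"
      unfolding hypF_as_newton_sum coeff ..
    finally show ?thesis
      by (simp add: c_def algebra_simps)
  qed
  then have "dual_hahn_u d r s i = newton_poly (dual_hahn_coeff d s (real i)) (dh_theta d r s) d"
    by (intro dual_hahn_u_eqI assms degree_newton_poly)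
  then show ?thesis
    by (simp add: poly_newton_poly)
qed

lemma pochhammer_Suc_Suc_expand:
  fixes a :: "'a::comm_ring_1"
  shows "pochhammer a (Suc (Suc m)) = a * pochhammer (a + 1) m * (a + 1 + of_nat m)"
    and "pochhammer (a - 1) (Suc (Suc m)) = (a - 1) * a * pochhammer (a + 1) m"
    and "pochhammer (a + 1) (Suc (Suc m)) = pochhammer (a + 1) m * (a + 1 + of_nat m) * (a + 2 + of_nat m)"
proof -
  show "pochhammer a (Suc (Suc m)) = a * pochhammer (a + 1) m * (a + 1 + of_nat m)"
    unfolding pochhammer_rec[of a "Suc m"] pochhammer_Suc[of "a + 1" m] by (simp only: mult.assoc)
  show "pochhammer (a - 1) (Suc (Suc m)) = (a - 1) * a * pochhammer (a + 1) m"
    unfolding pochhammer_rec[of "a - 1" "Suc m"] pochhammer_rec[of "a - 1 + 1" m] by simp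
  show "pochhammer (a + 1) (Suc (Suc m)) = pochhammer (a + 1) m * (a + 1 + of_nat m) * (a + 2 + of_nat m)"
    unfolding pochhammer_Suc[of "a + 1" "Suc m"] pochhammer_Suc[of "a + 1" m] by (simp add: algebra_simps)
qed

lemma pochhammer_minus_three_term:
  fixes x r :: real
  shows "pochhammer (- x) (Suc n) * (real (Suc n) * (real (Suc n) - 2 * real d - 1))
      - (r - real d + real n) * (real n - real d) * real (Suc n) * pochhammer (- x) n
    = (x - real d) * (x - real d + r) * pochhammer (- (x + 1)) (Suc n)
      - ((x - real d) * (x - real d + r) + x * (x + r)) * pochhammer (- x) (Suc n)
      + x * (x + r) * pochhammer (- (x - 1)) (Suc n)"
proof (cases n)
  case (Suc m)
  have shifts: "- (x + 1) = - x - 1" "- (x - 1) = - x + 1" by simp_all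
  define E where "E = pochhammer (- x + 1) m"
  \<comment> \<open>every Pochhammer symbol involved is a multiple of E, leaving a polynomial identity\<close>
  show ?thesis
    unfolding Suc shifts pochhammer_rec[of "- x" m] pochhammer_Suc_Suc_expand[of "- x" m]
      E_def[symmetric] of_nat_Suc
    by algebra
qed (simp add: algebra_simps)

lemma pochhammer_minus_mult_pochhammer_three_term:
  fixes x r :: real
  shows "pochhammer (- x) (Suc n) * pochhammer (x - real d + r) (Suc n)
        * (2 * real (Suc n) * (2 * real (Suc n) - 2 * real d - 1))
      - (real n - real d) * (r - real d + 2 * real n) * (r - real d + 2 * real n + 1) * real (Suc n)
        * (pochhammer (- x) n * pochhammer (x - real d + r) n)
    = (x - real d) * (x - real d + r)
        * (pochhammer (- (x + 1)) (Suc n) * pochhammer (x + 1 - real d + r) (Suc n))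
      - ((x - real d) * (x - real d + r) + x * (x + r))
        * (pochhammer (- x) (Suc n) * pochhammer (x - real d + r) (Suc n))
      + x * (x + r) * (pochhammer (- (x - 1)) (Suc n) * pochhammer (x - 1 - real d + r) (Suc n))"
proof (cases n)
  case (Suc m)
  have shifts: "- (x + 1) = - x - 1" "- (x - 1) = - x + 1"
    "x + 1 - real d + r = (x - real d + r) + 1" "x - 1 - real d + r = (x - real d + r) - 1"
    by simp_all
  define E where "E = pochhammer (- x + 1) m"
  define F where "F = pochhammer (x - real d + r + 1) m"
  show ?thesis
    unfolding Suc shifts pochhammer_rec[of "- x" m] pochhammer_Suc_Suc_expand[of "- x" m]
      pochhammer_rec[of "x - real d + r" m] pochhammer_Suc_Suc_expand[of "x - real d + r" m]
      E_def[symmetric] F_def[symmetric] of_nat_Suc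
    by algebra
qed (simp add: algebra_simps)

lemma pochhammer_neq_0_if_notin_Ints: "(a::real) \<notin> \<int> \<Longrightarrow> pochhammer a n \<noteq> 0"
  by (auto simp: pochhammer_eq_0_iff)

lemma three_term_divide:
  fixes D g :: "'a::field"
  assumes "D * g \<noteq> 0" and "k * (p * t - g * q) = A * u - B * p + C * v"
  shows "k * (p / (D * g) * t - q / D) = A * (u / (D * g)) - B * (p / (D * g)) + C * (v / (D * g))"
proof -
  have "k * (p / (D * g) * t - q / D) = k * (p * t - g * q) / (D * g)"
    using assms(1) by (simp add: field_simps)
  also have "\<dots> = A * (u / (D * g)) - B * (p / (D * g)) + C * (v / (D * g))"
    unfolding assms(2) by (simp only: add_divide_distrib diff_divide_distrib times_divide_eq_right)
  finally show ?thesis .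
qed

lemma dual_hahn_coeff_three_term:
  assumes "r \<notin> \<int>" and "n \<le> d"
  shows "dual_hahn_coeff d (- r) x n * (real n * (real n - 2 * real d - 1))
      - (if n = 0 then 0 else dual_hahn_coeff d (- r) x (n - 1))
    = (x - real d) * (x - real d + r) * dual_hahn_coeff d (- r) (x + 1) n
      - ((x - real d) * (x - real d + r) + x * (x + r)) * dual_hahn_coeff d (- r) x n
      + x * (x + r) * dual_hahn_coeff d (- r) (x - 1) n"
proof (cases n)
  case (Suc m)
  define D where "D k = pochhammer (r - real d) k * pochhammer (- real d) k * fact k" for k
  define g where "g = (r - real d + real m) * (real m - real d) * real (Suc m)"
  have coeff: "dual_hahn_coeff d (- r) y k = pochhammer (- y) k / D k" for y k
    by (simp add: dual_hahn_coeff_def D_def)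
  have D_Suc: "D (Suc m) = D m * g"
    by (simp add: D_def g_def pochhammer_Suc algebra_simps)
  have "r - real d \<notin> \<int>"
    using assms(1) Ints_add[OF _ Ints_of_nat, of "r - real d" d] by auto
  then have "D (Suc m) \<noteq> 0"
    using Suc assms(2) by (simp add: D_def pochhammer_neq_0_if_notin_Ints pochhammer_of_nat_eq_0_iff)
  then have "1 * (pochhammer (- x) (Suc m) / (D m * g) * (real (Suc m) * (real (Suc m) - 2 * real d - 1))
      - pochhammer (- x) m / D m)
    = (x - real d) * (x - real d + r) * (pochhammer (- (x + 1)) (Suc m) / (D m * g))
      - ((x - real d) * (x - real d + r) + x * (x + r)) * (pochhammer (- x) (Suc m) / (D m * g))
      + x * (x + r) * (pochhammer (- (x - 1)) (Suc m) / (D m * g))"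
    unfolding D_Suc
    by (rule three_term_divide) (unfold g_def mult_1_left, rule pochhammer_minus_three_term)
  then show ?thesis
    unfolding Suc coeff D_Suc by simp
qed (simp add: dual_hahn_coeff_def algebra_simps)

definition hyp4F3_coeff :: "nat \<Rightarrow> real \<Rightarrow> real \<Rightarrow> nat \<Rightarrow> real" where
  "hyp4F3_coeff d r x n = pochhammer (- x) n * pochhammer (x - real d + r) n
    / (pochhammer (- real d) n * pochhammer ((r - real d) / 2) n * pochhammer ((r - real d + 1) / 2) n * fact n)"

lemma hyp4F3_coeff_three_term:
  assumes "r \<notin> \<int>" and "n \<le> d"
  shows "4 * (hyp4F3_coeff d r x n * (real n * (real n - real d - 1/2))
      - (if n = 0 then 0 else hyp4F3_coeff d r x (n - 1)))
    = (x - real d) * (x - real d + r) * hyp4F3_coeff d r (x + 1) n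
      - ((x - real d) * (x - real d + r) + x * (x + r)) * hyp4F3_coeff d r x n
      + x * (x + r) * hyp4F3_coeff d r (x - 1) n"
proof (cases n)
  case (Suc m)
  define D where "D k = pochhammer (- real d) k * pochhammer ((r - real d) / 2) k
    * pochhammer ((r - real d + 1) / 2) k * fact k" for k
  define g where
    "g = (real m - real d) * ((r - real d) / 2 + real m) * ((r - real d + 1) / 2 + real m) * real (Suc m)"
  define q where "q y k = pochhammer (- y) k * pochhammer (y - real d + r) k" for y k
  have coeff: "hyp4F3_coeff d r y k = q y k / D k" for y k
    by (simp add: hyp4F3_coeff_def D_def q_def)
  have D_Suc: "D (Suc m) = D m * g"
    by (simp add: D_def g_def pochhammer_Suc algebra_simps)
  have "(r - real d) / 2 \<notin> \<int>" "(r - real d + 1) / 2 \<notin> \<int>"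
  proof -
    have "r = 2 * ((r - real d) / 2) + real d" "r = 2 * ((r - real d + 1) / 2) + real d - 1"
      by (simp_all add: field_simps)
    then show "(r - real d) / 2 \<notin> \<int>" "(r - real d + 1) / 2 \<notin> \<int>"
      using assms(1) by (metis Ints_add Ints_diff Ints_mult Ints_of_nat Ints_1 Ints_numeral)+
  qed
  then have "D (Suc m) \<noteq> 0"
    using Suc assms(2) by (simp add: D_def pochhammer_neq_0_if_notin_Ints pochhammer_of_nat_eq_0_iff)
  have "4 * (q x (Suc m) * (real (Suc m) * (real (Suc m) - real d - 1/2)) - g * q x m)
    = q x (Suc m) * (2 * real (Suc m) * (2 * real (Suc m) - 2 * real d - 1))
      - (real m - real d) * (r - real d + 2 * real m) * (r - real d + 2 * real m + 1) * real (Suc m) * q x m"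
    unfolding g_def by (simp add: field_simps)
  also have "\<dots> = (x - real d) * (x - real d + r) * q (x + 1) (Suc m)
      - ((x - real d) * (x - real d + r) + x * (x + r)) * q x (Suc m)
      + x * (x + r) * q (x - 1) (Suc m)"
    unfolding q_def by (rule pochhammer_minus_mult_pochhammer_three_term)
  finally have "4 * (q x (Suc m) / (D m * g) * (real (Suc m) * (real (Suc m) - real d - 1/2)) - q x m / D m)
    = (x - real d) * (x - real d + r) * (q (x + 1) (Suc m) / (D m * g))
      - ((x - real d) * (x - real d + r) + x * (x + r)) * (q x (Suc m) / (D m * g))
      + x * (x + r) * (q (x - 1) (Suc m) / (D m * g))"
    using \<open>D (Suc m) \<noteq> 0\<close> unfolding D_Suc by (rule three_term_divide[rotated])
  then show ?thesis
    unfolding Suc coeff D_Suc by simp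
qed (simp add: hyp4F3_coeff_def algebra_simps)

lemma hyp4F3_newton_sum_eq_hypF:
  "newton_sum (hyp4F3_coeff d r x) (\<lambda>l. real l * (real l - real d - 1/2)) (a * (a - real d - 1/2)) d
    = hypF [- x, x - real d + r, - a, a - real d - 1/2] [- real d, (r - real d) / 2, (r - real d + 1) / 2] d"
proof -
  have coeff: "(\<lambda>n. prod_list (map (\<lambda>b. pochhammer b n) [- x, x - real d + r])
      / (prod_list (map (\<lambda>b. pochhammer b n) [- real d, (r - real d) / 2, (r - real d + 1) / 2]) * fact n))
    = hyp4F3_coeff d r x"
    by (simp add: fun_eq_iff hyp4F3_coeff_def mult.assoc)
  have param: "b + (- real d - 1/2) = b - real d - 1/2" for b :: real
    by simp
  show ?thesis
    using hypF_as_newton_sum[of "[- x, x - real d + r]" a "- real d - 1/2"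
        "[- real d, (r - real d) / 2, (r - real d + 1) / 2]" d]
    unfolding coeff param by simp
qed

lemma dual_hahn_sum_three_term:
  assumes "r \<notin> \<int>" and "k < d"
  defines "t \<equiv> \<lambda>l. real l * (real l - 2 * real d - 1)"
  shows "z * newton_sum (dual_hahn_coeff d (- r) (real k)) t z d
    = (real k - real d) * (real k - real d + r) * newton_sum (dual_hahn_coeff d (- r) (real k + 1)) t z d
      - ((real k - real d) * (real k - real d + r) + real k * (real k + r))
        * newton_sum (dual_hahn_coeff d (- r) (real k)) t z d
      + real k * (real k + r) * newton_sum (dual_hahn_coeff d (- r) (real k - 1)) t z d"
    (is "z * ?S = ?R")
proof -
  have "1 * z * ?S = ?R"
  proof (rule newton_sum_three_term)
    show "dual_hahn_coeff d (- r) (real k) d = 0"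
      using assms(2) by (simp add: dual_hahn_coeff_def pochhammer_of_nat_eq_0_iff)
  qed (unfold t_def mult_1_left, erule dual_hahn_coeff_three_term[OF assms(1)])
  then show ?thesis by simp
qed

lemma hyp4F3_sum_three_term:
  assumes "r \<notin> \<int>" and "k < d"
  defines "t \<equiv> \<lambda>l. real l * (real l - real d - 1/2)"
  shows "4 * y * newton_sum (hyp4F3_coeff d r (real k)) t y d
    = (real k - real d) * (real k - real d + r) * newton_sum (hyp4F3_coeff d r (real k + 1)) t y d
      - ((real k - real d) * (real k - real d + r) + real k * (real k + r))
        * newton_sum (hyp4F3_coeff d r (real k)) t y d
      + real k * (real k + r) * newton_sum (hyp4F3_coeff d r (real k - 1)) t y d"
proof (rule newton_sum_three_term)
  show "hyp4F3_coeff d r (real k) d = 0"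
    using assms(2) by (simp add: hyp4F3_coeff_def pochhammer_of_nat_eq_0_iff)
qed (unfold t_def, erule hyp4F3_coeff_three_term[OF assms(1)])

lemma dual_hahn_sum_eq_hyp4F3_sum:
  assumes "r \<notin> \<int>" and "i \<le> d"
  shows "newton_sum (dual_hahn_coeff d (- r) (real i)) (\<lambda>l. real l * (real l - 2 * real d - 1)) (4 * y) d
    = newton_sum (hyp4F3_coeff d r (real i)) (\<lambda>l. real l * (real l - real d - 1/2)) y d"
proof -
  define f where "f k = newton_sum (dual_hahn_coeff d (- r) (real k))
    (\<lambda>l. real l * (real l - 2 * real d - 1)) (4 * y) d" for k
  define g where "g k = newton_sum (hyp4F3_coeff d r (real k)) (\<lambda>l. real l * (real l - real d - 1/2)) y d" for k
  define A where "A k = (real k - real d) * (real k - real d + r)" for k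
  define C where "C k = real k * (real k + r)" for k
  \<comment> \<open>at k = 0 the truncated k - 1 is harmless because C 0 = 0\<close>
  have pred: "real (k - 1) = real k - 1 \<or> C k = 0" for k
    by (cases k) (simp_all add: C_def)
  have "4 * y * f k = A k * f (Suc k) - (A k + C k) * f k + C k * f (k - 1)" if "k < d" for k
    using dual_hahn_sum_three_term[OF assms(1) that, of "4 * y"] pred[of k]
    unfolding f_def A_def C_def by (auto simp: add.commute)
  moreover have "4 * y * g k = A k * g (Suc k) - (A k + C k) * g k + C k * g (k - 1)" if "k < d" for k
    using hyp4F3_sum_three_term[OF assms(1) that, of y] pred[of k]
    unfolding g_def A_def C_def by (auto simp: add.commute)
  moreover have "A k \<noteq> 0" if "k < d" for k
  proof -
    have "r \<noteq> real d - real k"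
      using assms(1) Ints_diff[OF Ints_of_nat Ints_of_nat, of d k] by auto
    with that show ?thesis
      by (simp add: A_def)
  qed
  moreover have "f 0 = g 0"
    unfolding f_def g_def
    by (simp add: newton_sum_eq_coeff_0 dual_hahn_coeff_def hyp4F3_coeff_def pochhammer_0_left)
  ultimately have "f i = g i"
    using assms(2) by (rule three_term_recurrence_unique)
  then show ?thesis
    unfolding f_def g_def .
qed

theorem lemma3p4:
  fixes d i j :: nat and r s :: real
  assumes "r > -1" and "s > -1" and "r \<noteq> 0" and "r + s = 0"
    and "i \<le> d" and "j \<le> d"
  shows "poly (dual_hahn_u d r s i) ((real d - 2 * real j) * (real d - 2 * real j + 1)) =
         hypF [- real i, real i - real d + r, - real j, real j - real d - 1/2]
              [- real d, (r - real d) / 2, (r - real d + 1) / 2] d"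
proof -
  have s: "s = - r"
    using assms(4) by simp
  have "r \<notin> \<int>"
    using assms(1-4) by (auto elim!: Ints_cases)
  define y where "y = real j * (real j - real d - 1/2)"
  have "poly (dual_hahn_u d r s i) ((real d - 2 * real j) * (real d - 2 * real j + 1))
      = newton_sum (dual_hahn_coeff d (- r) (real i)) (dh_theta d r (- r))
          ((real d - 2 * real j) * (real d - 2 * real j + 1)) d"
    using poly_dual_hahn_u[of r s] assms(4) s by simp
  also have "\<dots> = newton_sum (dual_hahn_coeff d (- r) (real i))
      (\<lambda>l. real l * (real l - 2 * real d - 1)) (4 * y) d"
    by (rule newton_sum_cong_nodes) (simp add: dh_theta_def y_def algebra_simps)
  also have "\<dots> = newton_sum (hyp4F3_coeff d r (real i)) (\<lambda>l. real l * (real l - real d - 1/2)) y d"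
    by (rule dual_hahn_sum_eq_hyp4F3_sum[OF \<open>r \<notin> \<int>\<close> assms(5)])
  also have "\<dots> = hypF [- real i, real i - real d + r, - real j, real j - real d - 1/2]
      [- real d, (r - real d) / 2, (r - real d + 1) / 2] d"
    unfolding y_def by (rule hyp4F3_newton_sum_eq_hypF)
  finally show ?thesis .
qed

end
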